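(* Let $x,y$ be distinct odd primes with Legendre symbol $\left(\frac{x}{y}\right)=-1$. Then $x$ is balanced modulo $y$.
   Context: For positive integers $n,m$ with $\gcd(n,m)=1$, $n$ is said to be not balanced modulo $m$ iff there exists an odd Dirichlet character $\chi$ modulo $m$ (i.e. $\chi(-1)=-1$) such that $\chi(n)=1$ and $\sum_{0<k<m/2}\chi(k)\neq0$; otherwise $n$ is balanced modulo $m$. *)

theory Defs
  imports Complex_Main "HOL-Number_Theory.Number_Theory"
begin

definition dirichlet_character :: "nat \<Rightarrow> (int \<Rightarrow> complex) \<Rightarrow> bool" where
  "dirichlet_character m \<chi> \<longleftrightarrow>
     m > 0 \<and>
     (\<forall>a b. \<chi> (a * b) = \<chi> a * \<chi> b) \<and>
     (\<forall>a. \<chi> (a + int m) = \<chi> a) \<and>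
     (\<forall>a. \<chi> a = 0 \<longleftrightarrow> \<not> coprime a (int m))"

definition odd_character :: "(int \<Rightarrow> complex) \<Rightarrow> bool" where
  "odd_character \<chi> \<longleftrightarrow> \<chi> (-1) = -1"

definition half_sum :: "nat \<Rightarrow> (int \<Rightarrow> complex) \<Rightarrow> complex" where
  "half_sum m \<chi> = (\<Sum>k\<in>{k::nat. 0 < k \<and> 2 * k < m}. \<chi> (int k))"

definition not_balanced :: "nat \<Rightarrow> nat \<Rightarrow> bool" where
  "not_balanced n m \<longleftrightarrow>
     (\<exists>\<chi>. dirichlet_character m \<chi> \<and> odd_character \<chi> \<and> \<chi> (int n) = 1 \<and> half_sum m \<chi> \<noteq> 0)"

definition balanced :: "nat \<Rightarrow> nat \<Rightarrow> bool" where
  "balanced n m \<longleftrightarrow> \<not> not_balanced n m"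

end

theory Submission
  imports Defs
begin

text \<open>By Euler's criterion \<open>x ^ ((y - 1) div 2) \<equiv> -1 (mod y)\<close>, so every character \<open>\<chi>\<close> modulo \<open>y\<close>
  with \<open>\<chi> x = 1\<close> satisfies \<open>\<chi> (-1) = 1\<close>, i.e. is even. Hence no odd character is trivial at \<open>x\<close>,
  and \<open>x\<close> is balanced regardless of the half sums.\<close>

lemma dirichlet_character_add_mult:
  assumes "dirichlet_character m \<chi>"
  shows "\<chi> (a + k * int m) = \<chi> a"
proof (induction k rule: int_induct[where k = 0])
  case (step1 i)
  have "\<chi> (a + (i + 1) * int m) = \<chi> ((a + i * int m) + int m)"
    by (simp add: algebra_simps)
  with assms step1 show ?case
    unfolding dirichlet_character_def by simp
next
  case (step2 i)
  have "\<chi> (a + i * int m) = \<chi> ((a + (i - 1) * int m) + int m)"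
    by (simp add: algebra_simps)
  with assms step2 show ?case
    unfolding dirichlet_character_def by simp
qed simp

lemma dirichlet_character_cong:
  assumes "dirichlet_character m \<chi>" "[a = b] (mod int m)"
  shows "\<chi> a = \<chi> b"
proof -
  obtain k where "b = a + int m * k"
    using assms(2) unfolding cong_iff_lin by blast
  then show ?thesis
    using dirichlet_character_add_mult[OF assms(1), of a k] by (simp add: mult.commute)
qed

lemma dirichlet_character_one:
  assumes "dirichlet_character m \<chi>"
  shows "\<chi> 1 = 1"
proof -
  have "\<chi> 1 = \<chi> 1 * \<chi> 1" "\<chi> 1 \<noteq> 0"
    using assms unfolding dirichlet_character_def by (metis mult_1, simp)
  then show ?thesis by simp
qed

lemma dirichlet_character_power:
  assumes "dirichlet_character m \<chi>"
  shows "\<chi> (a ^ k) = \<chi> a ^ k"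
  using assms dirichlet_character_one[OF assms]
  by (induction k) (simp_all add: dirichlet_character_def)

lemma odd_character_not_trivial_at_root_of_minus_one:
  assumes "dirichlet_character m \<chi>" "odd_character \<chi>" "[a ^ k = -1] (mod int m)"
  shows "\<chi> a \<noteq> 1"
proof
  assume "\<chi> a = 1"
  then have "\<chi> (-1) = 1"
    using dirichlet_character_cong[OF assms(1) assms(3)] dirichlet_character_power[OF assms(1)]
    by simp
  with assms(2) show False
    unfolding odd_character_def by simp
qed

lemma balanced_if_power_cong_minus_one:
  assumes "[int n ^ k = -1] (mod int m)"
  shows "balanced n m"
  using odd_character_not_trivial_at_root_of_minus_one[OF _ _ assms]
  unfolding balanced_def not_balanced_def by blast

theorem lemma4p5:
  fixes x y :: nat
  assumes "prime x" and "prime y" and "odd x" and "odd y" and "x \<noteq> y"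
    and "Legendre (int x) (int y) = -1"
  shows "balanced x y"
proof (rule balanced_if_power_cong_minus_one)
  have "2 < y"
    using prime_ge_2_nat[OF \<open>prime y\<close>] \<open>odd y\<close> by (cases "y = 2") auto
  then have "[Legendre (int x) (int y) = int x ^ ((y - 1) div 2)] (mod int y)"
    using euler_criterion[OF \<open>prime y\<close>] by blast
  with \<open>Legendre (int x) (int y) = -1\<close>
  show "[int x ^ ((y - 1) div 2) = -1] (mod int y)"
    by (simp add: cong_sym)
qed

end
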